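(* Let $I\ge 1$ and let $\lambda_h>0$, $\lambda_g>0$, $\lambda_\eta>0$ and $\lambda_1,\dots,\lambda_I>0$ be such that $\lambda_1,\dots,\lambda_I$ are pairwise distinct and $\lambda_\eta\neq\lambda_i$ for all $i$. Let $A,B,F,Z$ be independent random variables, where $A$ is exponential with rate $\lambda_h$; $B=E_1+\dots+E_I$ with $E_1,\dots,E_I$ independent and $E_i$ exponential with rate $\lambda_i$; $F$ is exponential with rate $\lambda_\eta$; and $Z$ has density $f_Z(z)=\frac{z}{\lambda_g^2}e^{-z/\lambda_g}$ for $z>0$. Let $L_\eta=\frac{A}{F+B}+Z$. Write $a_x=\frac{x}{\lambda_g\lambda_h}$ and $b_x=\frac{x+\lambda_h\gamma_{th}}{\lambda_g\lambda_h}$. Then for every $\gamma_{th}>0$, $$\mathbb{P}(L_\eta<\gamma_{th})=\sum_{i=1}^{I}\frac{c_i}{\lambda_g^3\lambda_h^2(\lambda_i-\lambda_\eta)}\Bigg\{\lambda_g e^{-\frac{\lambda_\eta+\lambda_i+\lambda_h\gamma_{th}}{\lambda_g\lambda_h}}\Big[e^{a_{\lambda_i}}\Big(\lambda_\eta\lambda_i(\lambda_\eta+\lambda_h\gamma_{th})\big(\mathrm{Ei}(a_{\lambda_\eta})-\mathrm{Ei}(b_{\lambda_\eta})\big)+\lambda_g\lambda_h^2(\lambda_\eta-\lambda_i)(\lambda_g+\gamma_{th})e^{a_{\lambda_\eta}}\Big)-\lambda_\eta\lambda_i e^{a_{\lambda_\eta}}(\lambda_i+\lambda_h\gamma_{th})\big(\mathrm{Ei}(a_{\lambda_i})-\mathrm{Ei}(b_{\lambda_i})\big)\Big]+\lambda_g^3\lambda_h^2(\lambda_i-\lambda_\eta)\Bigg\},$$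 where $c_i=\prod_{j=1,\,j\neq i}^{I}\frac{\lambda_j}{\lambda_j-\lambda_i}$ (with $c_1=1$ when $I=1$).
   Context: $\mathrm{Ei}(x)=\int_{-\infty}^{x}\frac{e^t}{t}\,dt$ (Cauchy principal value at $t=0$) is the exponential integral, used here for $x>0$. In the paper, $L_\eta$ models the (normalized) SINR of the $k$-th user in STBC-aided cooperative NOMA with perfect timing synchronization, perfect channel state information, and imperfect successive interference cancellation, where $F$ is the residual interference power left by imperfect SIC; $\mathbb{P}(L_\eta<\gamma_{th})$ is the outage probability at SINR threshold $\gamma_{th}$. *)

theory Defs
  imports "HOL-Probability.Probability"
begin

text \<open>Exponential integral Ei(x) = PV int_{-inf}^{x} e^t/t dt, used for x > 0:
  the Cauchy principal value at t = 0 is the limit as eps -> 0+ of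
  int_{-inf}^{-eps} e^t/t dt + int_{eps}^{x} e^t/t dt.\<close>
definition Ei :: "real \<Rightarrow> real" where
  "Ei x = Lim (at_right 0)
     (\<lambda>\<epsilon>::real. (LBINT t = -\<infinity>..ereal (-\<epsilon>). exp t / t) + (LBINT t = ereal \<epsilon>..ereal x. exp t / t))"

end

theory Submission
  imports Defs
begin

text \<open>Given \<open>Y = F + B\<close> and \<open>Z\<close>, the event is \<open>A < Y (g - Z)\<close>, whose conditional probability
  is \<open>1 - exp (-lh (g - Z) Y)\<close> for \<open>Z \<le> g\<close>. Averaging over \<open>Y\<close> by independence turns
  the outage probability into \<open>\<integral>\<^sub>0\<^sup>g f\<^sub>Z(z) (1 - L(lh (g - z))) dz\<close>, where
  \<open>L(s) = le/(le+s) \<Prod>\<^sub>i l\<^sub>i/(l\<^sub>i+s)\<close> is the Laplace transform of \<open>Y\<close>. Partial fractions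
  give \<open>\<Prod>\<^sub>i l\<^sub>i/(l\<^sub>i+s) = \<Sum>\<^sub>i c\<^sub>i l\<^sub>i/(l\<^sub>i+s)\<close> with \<open>\<Sum>\<^sub>i c\<^sub>i = 1\<close>, which splits the
  integrand into terms with the two poles \<open>le\<close> and \<open>l\<^sub>i\<close>; each of them has an elementary
  antiderivative in terms of \<open>exp\<close> and \<open>Ei\<close>.\<close>

section \<open>The exponential integral\<close>

definition shi_integrand :: "real \<Rightarrow> real" where
  "shi_integrand t = (if t = 0 then 2 else (exp t - exp (-t)) / t)"

lemma isCont_shi_integrand: "isCont shi_integrand t"
proof (cases "t = 0")
  case True
  have "((\<lambda>t. exp t - exp (-t)) has_field_derivative (exp 0 + exp (-0))) (at 0)"
    by (auto intro!: derivative_eq_intros)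
  then have "((\<lambda>h. (exp h - exp (-h)) / h) \<longlongrightarrow> (2::real)) (at 0)"
    by (simp add: DERIV_def)
  then have "(shi_integrand \<longlongrightarrow> 2) (at 0)"
    by (rule Lim_transform_eventually) (auto simp: shi_integrand_def eventually_at_filter)
  then show ?thesis using True by (simp add: isCont_def shi_integrand_def)
next
  case False
  have "eventually (\<lambda>x. (exp x - exp (-x)) / x = shi_integrand x) (nhds t)"
    using False by (auto simp: shi_integrand_def eventually_nhds intro!: exI[of _ "-{0}"])
  moreover have "isCont (\<lambda>x. (exp x - exp (-x)) / x) t"
    using False by (auto intro!: continuous_intros)
  ultimately show ?thesis using isCont_cong by metis
qed

lemma interval_integrable_exp_div_neg:
  assumes "e > 0"
  shows "interval_lebesgue_integrable lborel (-\<infinity>) (ereal (-e)) (\<lambda>t. exp t / t)"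
proof -
  have "set_integrable lborel (einterval (-\<infinity>) (ereal (-e))) exp"
  proof (rule interval_integral_FTC_nonneg(1)[where F=exp and A=0 and B="exp (-e)"])
    show "((exp \<circ> real_of_ereal) \<longlongrightarrow> 0) (at_right (-\<infinity>))"
      unfolding ereal_tendsto_simps1 by (rule exp_at_bot)
    show "((exp \<circ> real_of_ereal) \<longlongrightarrow> exp (-e)) (at_left (ereal (-e)))"
      unfolding ereal_tendsto_simps1 by (intro tendsto_intros)
  qed (auto intro!: derivative_eq_intros continuous_intros)
  then have bound: "set_integrable lborel (einterval (-\<infinity>) (ereal (-e))) (\<lambda>t. exp t / e)"
    by (auto intro: set_integrable_divide)
  have "set_integrable lborel (einterval (-\<infinity>) (ereal (-e))) (\<lambda>t. exp t / t)"
  proof (rule set_integrable_bound[OF bound])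
    show "set_borel_measurable lborel (einterval (-\<infinity>) (ereal (-e))) (\<lambda>t. exp t / t)"
      unfolding set_borel_measurable_def by measurable
    show "AE x in lborel. x \<in> einterval (-\<infinity>) (ereal (-e)) \<longrightarrow> norm (exp x / x) \<le> norm (exp x / e)"
    proof (rule AE_I2, safe)
      fix x assume "x \<in> einterval (-\<infinity>) (ereal (-e))"
      then have x: "x < -e" by (simp add: einterval_iff)
      have "exp x / \<bar>x\<bar> \<le> exp x / e"
        using x assms by (intro divide_left_mono) (auto simp: mult_neg_pos)
      then show "norm (exp x / x) \<le> norm (exp x / e)" using assms by simp
    qed
  qed
  then show ?thesis by (simp add: interval_lebesgue_integrable_def)
qed

lemma interval_integrable_exp_div_pos:
  assumes "0 < a" "0 < b"
  shows "interval_lebesgue_integrable lborel (ereal a) (ereal b) (\<lambda>t. exp t / t)"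
  using assms by (intro interval_integrable_isCont) (auto intro!: continuous_intros)

definition Ei_pv :: "real \<Rightarrow> real \<Rightarrow> real" where
  "Ei_pv x e = (LBINT t = -\<infinity>..ereal (-e). exp t / t) + (LBINT t = ereal e..ereal x. exp t / t)"

text \<open>The singular parts of \<open>exp t / t\<close> on \<open>[-1,-e]\<close> and \<open>[e,1]\<close> cancel, leaving the
  continuous integrand \<open>shi_integrand\<close>.\<close>
lemma Ei_pv_1_eq:
  assumes e: "0 < e" "e < 1"
  shows "Ei_pv 1 e = Ei_pv 1 1 + (LBINT t = ereal e..ereal 1. shi_integrand t)"
proof -
  have tail: "(LBINT t = -\<infinity>..ereal (-1). exp t / t) + (LBINT t = ereal (-1)..ereal (-e). exp t / t)
      = (LBINT t = -\<infinity>..ereal (-e). exp t / t)"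
  proof (rule interval_integral_sum)
    have "max (-\<infinity>) (max (ereal (-1)) (ereal (-e))) = ereal (-e)" using e by auto
    then show "interval_lebesgue_integrable lborel (min (- \<infinity>) (min (ereal (- 1)) (ereal (- e))))
       (max (- \<infinity>) (max (ereal (- 1)) (ereal (- e)))) (\<lambda>t. exp t / t)"
      using interval_integrable_exp_div_neg[OF e(1)] by simp
  qed
  have reflect: "(LBINT t = ereal (-1)..ereal (-e). exp t / t) = (LBINT t = ereal e..ereal 1. exp (-t) / (-t))"
    by (subst interval_integral_reflect) simp
  have int_pos: "interval_lebesgue_integrable lborel (ereal e) (ereal 1) (\<lambda>t. exp t / t)"
    using e by (intro interval_integrable_exp_div_pos) auto
  have int_neg: "interval_lebesgue_integrable lborel (ereal e) (ereal 1) (\<lambda>t. exp (-t) / (-t))"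
    using e by (intro interval_integrable_isCont) (auto intro!: continuous_intros)
  have add: "(LBINT t = ereal e..ereal 1. exp t / t) + (LBINT t = ereal e..ereal 1. exp (-t) / (-t))
      = (LBINT t = ereal e..ereal 1. exp t / t + exp (-t) / (-t))"
    using interval_lebesgue_integral_add(2)[OF int_pos int_neg] by simp
  have "(LBINT t = ereal e..ereal 1. exp t / t + exp (-t) / (-t))
      = (LBINT t = ereal e..ereal 1. shi_integrand t)"
    using e by (intro interval_lebesgue_integral_cong)
      (auto simp: einterval_iff shi_integrand_def field_simps)
  then show ?thesis
    unfolding Ei_pv_def using tail reflect add by simp
qed

lemma Ei_pv_1_tendsto:
  "(Ei_pv 1 \<longlongrightarrow> Ei_pv 1 1 + (LBINT t = ereal 0..ereal 1. shi_integrand t)) (at_right 0)"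
proof -
  have "((\<lambda>u. LBINT y = ereal 1..ereal u. shi_integrand y) has_vector_derivative shi_integrand 0)
      (at 0 within {0..1})"
    by (rule interval_integral_FTC2)
      (auto intro!: continuous_at_imp_continuous_on isCont_shi_integrand)
  then have "continuous (at 0 within {0..1}) (\<lambda>u. LBINT y = ereal 1..ereal u. shi_integrand y)"
    by (rule has_vector_derivative_continuous)
  then have "((\<lambda>u. - (LBINT y = ereal 1..ereal u. shi_integrand y))
      \<longlongrightarrow> - (LBINT y = ereal 1..ereal 0. shi_integrand y)) (at_right 0)"
    by (intro tendsto_minus) (simp add: continuous_within at_within_Icc_at_right)
  then have "((\<lambda>e. LBINT t = ereal e..ereal 1. shi_integrand t)
      \<longlongrightarrow> (LBINT t = ereal 0..ereal 1. shi_integrand t)) (at_right 0)"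
    by (subst (1 2) interval_integral_endpoints_reverse) simp
  then have "((\<lambda>e. Ei_pv 1 1 + (LBINT t = ereal e..ereal 1. shi_integrand t))
      \<longlongrightarrow> Ei_pv 1 1 + (LBINT t = ereal 0..ereal 1. shi_integrand t)) (at_right 0)"
    by (intro tendsto_add tendsto_const)
  moreover have "eventually (\<lambda>e. Ei_pv 1 1 + (LBINT t = ereal e..ereal 1. shi_integrand t) = Ei_pv 1 e)
      (at_right 0)"
    unfolding eventually_at_right_field by (rule exI[of _ 1]) (auto simp: Ei_pv_1_eq)
  ultimately show ?thesis by (rule Lim_transform_eventually)
qed

lemma Ei_eq_Ei_1_plus:
  assumes x: "0 < x"
  shows "Ei x = Ei 1 + (LBINT t = ereal 1..ereal x. exp t / t)"
proof -
  define L where "L = Ei_pv 1 1 + (LBINT t = ereal 0..ereal 1. shi_integrand t)"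
  have Ei_Lim: "Ei y = Lim (at_right 0) (Ei_pv y)" for y
    unfolding Ei_def Ei_pv_def ..
  have Ei_1: "Ei 1 = L"
    unfolding Ei_Lim L_def by (rule tendsto_Lim[OF trivial_limit_at_right_real Ei_pv_1_tendsto])
  have "eventually (\<lambda>e. Ei_pv 1 e + (LBINT t = ereal 1..ereal x. exp t / t) = Ei_pv x e) (at_right 0)"
    unfolding eventually_at_right_field
  proof (rule exI[of _ "min 1 x"], intro conjI allI impI)
    show "0 < min 1 x" using x by simp
    fix e :: real assume e: "0 < e" "e < min 1 x"
    have "(LBINT t = ereal e..ereal 1. exp t / t) + (LBINT t = ereal 1..ereal x. exp t / t)
         = (LBINT t = ereal e..ereal x. exp t / t)"
      by (rule interval_integral_sum)
        (use e x in \<open>auto simp: min_def max_def intro!: interval_integrable_exp_div_pos\<close>)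
    then show "Ei_pv 1 e + (LBINT t = ereal 1..ereal x. exp t / t) = Ei_pv x e"
      unfolding Ei_pv_def by simp
  qed
  then have "(Ei_pv x \<longlongrightarrow> L + (LBINT t = ereal 1..ereal x. exp t / t)) (at_right 0)"
    unfolding L_def by (rule Lim_transform_eventually[OF tendsto_add[OF Ei_pv_1_tendsto tendsto_const]])
  then have "Ei x = L + (LBINT t = ereal 1..ereal x. exp t / t)"
    unfolding Ei_Lim by (rule tendsto_Lim[OF trivial_limit_at_right_real])
  then show ?thesis using Ei_1 by simp
qed

lemma Ei_diff_eq_integral:
  assumes "0 < c" "0 < x"
  shows "Ei x = Ei c + (LBINT t = ereal c..ereal x. exp t / t)"
proof -
  have "(LBINT t = ereal 1..ereal c. exp t / t) + (LBINT t = ereal c..ereal x. exp t / t)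
         = (LBINT t = ereal 1..ereal x. exp t / t)"
    by (rule interval_integral_sum)
      (use assms in \<open>auto simp: min_def max_def intro!: interval_integrable_exp_div_pos\<close>)
  then show ?thesis using Ei_eq_Ei_1_plus[OF assms(1)] Ei_eq_Ei_1_plus[OF assms(2)] by simp
qed

lemma DERIV_Ei:
  assumes x: "0 < x"
  shows "(Ei has_real_derivative exp x / x) (at x)"
proof -
  have "((\<lambda>u. LBINT y = x/2..u. exp y / y) has_vector_derivative (exp x / x)) (at x within {x/2..2*x})"
    by (rule interval_integral_FTC2) (use x in \<open>auto intro!: continuous_intros\<close>)
  then have "((\<lambda>u. Ei (x/2) + (LBINT y = x/2..u. exp y / y)) has_real_derivative (exp x / x)) (at x)"
    using x by (auto simp: at_within_Icc_at has_real_derivative_iff_has_vector_derivative[symmetric]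
        intro!: derivative_eq_intros)
  then show ?thesis
  proof (rule has_field_derivative_transform_within_open)
    show "open {0::real<..}" "x \<in> {0<..}" using x by simp_all
    fix u :: real assume "u \<in> {0<..}"
    then show "Ei (x/2) + (LBINT y = x/2..u. exp y / y) = Ei u"
      using Ei_diff_eq_integral[of "x/2" u] x by simp
  qed
qed

lemma DERIV_Ei_compose:
  assumes "(f has_real_derivative f') (at x within s)" "0 < f x" "D = exp (f x) / f x * f'"
  shows "((\<lambda>x. Ei (f x)) has_real_derivative D) (at x within s)"
  using DERIV_chain2[OF DERIV_Ei[OF assms(2)] assms(1)] assms(3) by simp

section \<open>Integrals against the gamma density\<close>

lemma has_integral_gamma2_density:
  fixes lg g :: real
  assumes lg: "0 < lg" and g: "0 \<le> g"
  shows "((\<lambda>z. z / lg\<^sup>2 * exp (- z / lg)) has_integral (1 - exp (- g / lg) * (1 + g / lg))) {0..g}"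
proof -
  have "((\<lambda>z. z / lg\<^sup>2 * exp (- z / lg)) has_integral
     ((- (1 + g / lg) * exp (- g / lg)) - (- (1 + 0 / lg) * exp (- 0 / lg)))) {0..g}"
  proof (rule fundamental_theorem_of_calculus[OF g])
    fix x assume "x \<in> {0..g}"
    show "((\<lambda>z. - (1 + z / lg) * exp (- z / lg)) has_vector_derivative (x / lg\<^sup>2 * exp (- x / lg)))
        (at x within {0..g})"
      unfolding has_real_derivative_iff_has_vector_derivative[symmetric]
      using lg by (auto intro!: derivative_eq_intros simp: field_simps power2_eq_square)
  qed
  then show ?thesis by (simp add: algebra_simps)
qed

text \<open>The antiderivative is \<open>K (lg e\<^sup>u - (g + m/lh) Ei u)\<close> with \<open>u = (m + lh (g - z)) / (lg lh)\<close>.\<close>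
lemma has_integral_gamma2_density_div_affine:
  assumes lg: "0 < lg" and lh: "0 < lh" and g: "0 \<le> g" and m: "0 < m"
  shows "((\<lambda>z. z / lg\<^sup>2 * exp (- z / lg) / (m + lh * (g - z))) has_integral
     (exp (- ((m + lh * g) / (lg * lh))) / (lg\<^sup>2 * lh) *
       ((g + m / lh) * (Ei ((m + lh * g) / (lg * lh)) - Ei (m / (lg * lh)))
        - lg * (exp ((m + lh * g) / (lg * lh)) - exp (m / (lg * lh)))))) {0..g}"
proof -
  define K where "K = exp (- ((m + lh * g) / (lg * lh))) / (lg\<^sup>2 * lh)"
  define u where "u z = (m + lh * (g - z)) / (lg * lh)" for z
  define G where "G z = K * (lg * exp (u z) - (g + m / lh) * Ei (u z))" for z
  have "((\<lambda>z. z / lg\<^sup>2 * exp (- z / lg) / (m + lh * (g - z))) has_integral (G g - G 0)) {0..g}"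
  proof (rule fundamental_theorem_of_calculus[OF g])
    fix x assume x: "x \<in> {0..g}"
    define W where "W = m + lh * (g - x)"
    have W: "0 < W" using x lh m by (auto simp: W_def intro!: add_pos_nonneg)
    have ux: "u x = W / (lg * lh)" by (simp add: u_def W_def)
    have ux_pos: "0 < u x" unfolding ux using W lg lh by simp
    have exp_u: "exp (u x) = exp (- x / lg) * exp ((m + lh * g) / (lg * lh))"
      unfolding exp_add[symmetric] u_def using lg lh
      by (intro arg_cong[where f=exp]) (simp add: field_simps)
    have K_exp: "K * exp (u x) = exp (- x / lg) / (lg\<^sup>2 * lh)"
      unfolding K_def exp_u by (simp add: exp_minus field_simps)
    have du: "(u has_real_derivative (- 1 / lg)) (at x within {0..g})"
      unfolding u_def using lg lh by (auto intro!: derivative_eq_intros simp: field_simps)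
    have "(G has_real_derivative (K * exp (u x)) * (- 1 / lg) * (lg - (g + m / lh) / u x))
        (at x within {0..g})"
      unfolding G_def using lg lh ux_pos
      by (auto intro!: derivative_eq_intros DERIV_Ei_compose du simp: field_simps)
    also have "(K * exp (u x)) * (- 1 / lg) * (lg - (g + m / lh) / u x)
        = x / lg\<^sup>2 * exp (- x / lg) / (m + lh * (g - x))"
    proof -
      have factor: "(- 1 / lg) * (lg - (g + m / lh) / u x) = lh * x / W"
        unfolding ux using lg lh W by (simp add: field_simps) (simp add: W_def algebra_simps)
      show ?thesis
        unfolding K_exp mult.assoc factor using lg lh W
        by (simp add: W_def[symmetric] field_simps power2_eq_square) (simp add: W_def algebra_simps)
    qed
    finally show "(G has_vector_derivative x / lg\<^sup>2 * exp (- x / lg) / (m + lh * (g - x)))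
        (at x within {0..g})"
      unfolding has_real_derivative_iff_has_vector_derivative .
  qed
  also have "G g - G 0 = K * ((g + m / lh) * (Ei ((m + lh * g) / (lg * lh)) - Ei (m / (lg * lh)))
        - lg * (exp ((m + lh * g) / (lg * lh)) - exp (m / (lg * lh))))"
    unfolding G_def u_def by (simp add: algebra_simps)
  finally show ?thesis unfolding K_def .
qed

text \<open>The three exponentials are abstracted to positive reals \<open>pa, pb, q\<close> (and the four
  values of \<open>Ei\<close> to \<open>ea, fa, eb, fb\<close>) so that the field normalisation stays rational.\<close>
lemma outage_pair_algebra:
  fixes lg lh g ma mb pa pb q ea fa eb fb :: real
  assumes "0 < lg" "0 < lh" "0 < pa" "0 < pb" "0 < q" "mb \<noteq> ma"
  shows "(1 - (1/q) * (1 + g/lg)) - ma*mb/(mb-ma) *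
     ((1/(pa*q))/(lg\<^sup>2*lh) * ((g + ma/lh)*(fa - ea) - lg*(pa*q - pa))
      - (1/(pb*q))/(lg\<^sup>2*lh) * ((g+mb/lh)*(fb - eb) - lg*(pb*q - pb)))
   = 1/(lg^3*lh\<^sup>2*(mb-ma)) * (lg * (1/(pa*pb*q)) * (pb*(ma*mb*(ma+lh*g)*(ea - fa)
       + lg*lh\<^sup>2*(ma-mb)*(lg+g)*pa) - ma*mb*pa*(mb+lh*g)*(eb-fb)) + lg^3*lh\<^sup>2*(mb-ma))"
  using assms by (simp add: field_simps power2_eq_square power3_eq_cube)

lemma exp_affine_div_split:
  fixes lg lh g m :: real
  assumes "0 < lg" "0 < lh"
  shows "exp ((m + lh * g) / (lg * lh)) = exp (m / (lg * lh)) * exp (g / lg)"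
  unfolding exp_add[symmetric] using assms by (intro arg_cong[where f=exp]) (simp add: field_simps)

lemma exp_neg_affine_div_split:
  fixes lg lh g m1 m2 :: real
  assumes "0 < lg" "0 < lh"
  shows "exp (- (m1 + m2 + lh * g) / (lg * lh))
    = 1 / (exp (m1 / (lg * lh)) * exp (m2 / (lg * lh)) * exp (g / lg))"
proof -
  have "exp (m1 / (lg * lh)) * exp (m2 / (lg * lh)) * exp (g / lg) = exp ((m1 + m2 + lh * g) / (lg * lh))"
    unfolding exp_add[symmetric] using assms by (intro arg_cong[where f=exp]) (simp add: field_simps)
  moreover have "- (m1 + m2 + lh * g) / (lg * lh) = - ((m1 + m2 + lh * g) / (lg * lh))"
    by (rule minus_divide_left[symmetric])
  ultimately show ?thesis by (simp only: exp_minus) (simp add: inverse_eq_divide)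
qed

text \<open>With \<open>m1 = le\<close> and \<open>m2 = l i\<close> this is the \<open>i\<close>-th summand of the theorem without
  the factor \<open>c\<^sub>i\<close>.\<close>
definition outage_pair :: "real \<Rightarrow> real \<Rightarrow> real \<Rightarrow> real \<Rightarrow> real \<Rightarrow> real" where
  "outage_pair lg lh g m1 m2 =
     1 / (lg ^ 3 * lh\<^sup>2 * (m2 - m1)) *
       (lg * exp (- (m1 + m2 + lh * g) / (lg * lh)) *
          (exp (m2 / (lg * lh)) *
             (m1 * m2 * (m1 + lh * g) * (Ei (m1 / (lg * lh)) - Ei ((m1 + lh * g) / (lg * lh)))
              + lg * lh\<^sup>2 * (m1 - m2) * (lg + g) * exp (m1 / (lg * lh)))
           - m1 * m2 * exp (m1 / (lg * lh)) * (m2 + lh * g)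
             * (Ei (m2 / (lg * lh)) - Ei ((m2 + lh * g) / (lg * lh))))
        + lg ^ 3 * lh\<^sup>2 * (m2 - m1))"

lemma has_integral_outage_pair:
  fixes lg lh g m1 m2 :: real
  assumes lg: "0 < lg" and lh: "0 < lh" and g: "0 < g" and m1: "0 < m1" and m2: "0 < m2"
    and ne: "m1 \<noteq> m2"
  shows "((\<lambda>z. z / lg\<^sup>2 * exp (- z / lg) *
      (1 - m1 * m2 / (m2 - m1) * (1 / (m1 + lh * (g - z)) - 1 / (m2 + lh * (g - z)))))
    has_integral outage_pair lg lh g m1 m2) {0..g}"
proof -
  let ?f = "\<lambda>z. z / lg\<^sup>2 * exp (- z / lg)"
  let ?J = "\<lambda>m. exp (- ((m + lh * g) / (lg * lh))) / (lg\<^sup>2 * lh) *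
       ((g + m / lh) * (Ei ((m + lh * g) / (lg * lh)) - Ei (m / (lg * lh)))
        - lg * (exp ((m + lh * g) / (lg * lh)) - exp (m / (lg * lh))))"
  have integral: "((\<lambda>z. ?f z - m1 * m2 / (m2 - m1) * (?f z / (m1 + lh * (g - z)) - ?f z / (m2 + lh * (g - z))))
      has_integral ((1 - exp (- g / lg) * (1 + g / lg)) - m1 * m2 / (m2 - m1) * (?J m1 - ?J m2))) {0..g}"
    using g lg lh m1 m2
    by (intro has_integral_diff has_integral_mult_right has_integral_gamma2_density
        has_integral_gamma2_density_div_affine) auto
  have closed_form: "(1 - exp (- g / lg) * (1 + g / lg)) - m1 * m2 / (m2 - m1) * (?J m1 - ?J m2) = outage_pair lg lh g m1 m2"
    unfolding outage_pair_def exp_minus[of "(m1 + lh * g) / (lg * lh)"] exp_minus[of "(m2 + lh * g) / (lg * lh)"]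
      exp_affine_div_split[OF lg lh] exp_neg_affine_div_split[OF lg lh]
    using outage_pair_algebra[where ma=m1 and mb=m2 and pa="exp (m1 / (lg * lh))"
        and pb="exp (m2 / (lg * lh))" and q="exp (g / lg)" and ea="Ei (m1 / (lg * lh))"
        and fa="Ei ((m1 + lh * g) / (lg * lh))" and eb="Ei (m2 / (lg * lh))"
        and fb="Ei ((m2 + lh * g) / (lg * lh))", OF lg lh exp_gt_zero exp_gt_zero exp_gt_zero ne[symmetric]]
    by (simp add: exp_minus inverse_eq_divide mult.assoc)
  show ?thesis
    unfolding closed_form[symmetric]
    by (rule has_integral_eq[OF _ integral]) (simp add: divide_inverse algebra_simps)
qed

section \<open>Partial fractions\<close>

definition pf_coeff :: "'a set \<Rightarrow> ('a \<Rightarrow> real) \<Rightarrow> 'a \<Rightarrow> real" where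
  "pf_coeff K l i = (\<Prod>j\<in>K - {i}. l j / (l j - l i))"

lemma ratio_mult_ratio_split:
  fixes a b s :: real
  assumes "a \<noteq> b" "b + s \<noteq> 0" "a + s \<noteq> 0"
  shows "b / (b + s) * (a / (a + s)) = b / (b - a) * (a / (a + s)) + b / (b + s) * (a / (a - b))"
proof -
  have "b - a \<noteq> 0" "a - b \<noteq> 0" using assms by auto
  then show ?thesis using assms by (simp add: divide_simps) (simp add: algebra_simps)
qed

text \<open>The induction step uses the hypothesis both at \<open>s\<close> and at
  \<open>s = - l k\<close>.\<close>
lemma prod_ratio_eq_sum_pf_coeff:
  fixes l :: "'a \<Rightarrow> real"
  assumes "finite K" "K \<noteq> {}" "inj_on l K" "\<forall>i\<in>K. l i + s \<noteq> 0"
  shows "(\<Prod>i\<in>K. l i / (l i + s)) = (\<Sum>i\<in>K. pf_coeff K l i * (l i / (l i + s)))"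
  using assms
proof (induction K arbitrary: s rule: finite_ne_induct)
  case (singleton k)
  then show ?case by (simp add: pf_coeff_def)
next
  case (insert k K)
  let ?c = "pf_coeff K l"
  have inj: "inj_on l K" using insert.prems by simp
  have lk: "\<forall>i\<in>K. l i \<noteq> l k" using insert.prems insert.hyps by (auto simp: inj_on_def)
  have sk: "l k + s \<noteq> 0" and si: "\<forall>i\<in>K. l i + s \<noteq> 0" using insert.prems by auto
  have IH_s: "(\<Prod>i\<in>K. l i / (l i + s)) = (\<Sum>i\<in>K. ?c i * (l i / (l i + s)))"
    using insert.IH[OF inj si] .
  have IH_k: "(\<Prod>i\<in>K. l i / (l i - l k)) = (\<Sum>i\<in>K. ?c i * (l i / (l i - l k)))"
    using insert.IH[OF inj, of "- l k"] lk by simp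
  have split: "l k / (l k + s) * (l i / (l i + s))
      = l k / (l k - l i) * (l i / (l i + s)) + l k / (l k + s) * (l i / (l i - l k))"
    if "i \<in> K" for i
    using lk si sk that by (intro ratio_mult_ratio_split) auto
  have c_k: "pf_coeff (insert k K) l k = (\<Prod>j\<in>K. l j / (l j - l k))"
    using insert.hyps by (simp add: pf_coeff_def insert_Diff_if)
  have c_i: "pf_coeff (insert k K) l i = l k / (l k - l i) * ?c i" if "i \<in> K" for i
  proof -
    have "insert k K - {i} = insert k (K - {i})" using that insert.hyps by auto
    then show ?thesis using insert.hyps by (simp add: pf_coeff_def)
  qed
  have "(\<Prod>i\<in>insert k K. l i / (l i + s)) = (\<Sum>i\<in>K. ?c i * (l k / (l k + s) * (l i / (l i + s))))"
    using insert.hyps IH_s by (simp add: sum_distrib_left mult_ac)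
  also have "\<dots> = (\<Sum>i\<in>K. ?c i * (l k / (l k - l i) * (l i / (l i + s))))
      + l k / (l k + s) * (\<Sum>i\<in>K. ?c i * (l i / (l i - l k)))"
    by (simp only: split cong: sum.cong)
      (simp add: distrib_left sum.distrib sum_distrib_left mult_ac)
  also have "\<dots> = (\<Sum>i\<in>K. pf_coeff (insert k K) l i * (l i / (l i + s)))
      + pf_coeff (insert k K) l k * (l k / (l k + s))"
    unfolding IH_k[symmetric] c_k by (simp add: c_i mult_ac cong: sum.cong)
  also have "\<dots> = (\<Sum>i\<in>insert k K. pf_coeff (insert k K) l i * (l i / (l i + s)))"
    using insert.hyps by (simp add: add.commute)
  finally show ?case .
qed

lemma sum_pf_coeff:
  fixes l :: "'a \<Rightarrow> real"
  assumes "finite K" "K \<noteq> {}" "inj_on l K" "\<forall>i\<in>K. l i \<noteq> 0"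
  shows "(\<Sum>i\<in>K. pf_coeff K l i) = 1"
  using prod_ratio_eq_sum_pf_coeff[OF assms(1-3), of 0] assms(4) by simp

lemma ratio_mult_ratio_eq_diff:
  fixes a b s :: real
  assumes "0 < a" "0 < b" "a \<noteq> b" "0 \<le> s"
  shows "a / (a + s) * (b / (b + s)) = a * b / (b - a) * (1 / (a + s) - 1 / (b + s))"
proof -
  have "b - a \<noteq> 0" "a + s \<noteq> 0" "b + s \<noteq> 0" using assms by auto
  then show ?thesis by (simp add: divide_simps)
qed

definition hypoexp_laplace :: "real \<Rightarrow> ('a \<Rightarrow> real) \<Rightarrow> 'a set \<Rightarrow> real \<Rightarrow> real" where
  "hypoexp_laplace m l K s = m / (m + s) * (\<Prod>i\<in>K. l i / (l i + s))"

lemma hypoexp_laplace_bounds: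
  assumes "0 < m" "\<forall>i\<in>K. 0 < l i" "0 \<le> s"
  shows "0 \<le> hypoexp_laplace m l K s" "hypoexp_laplace m l K s \<le> 1"
proof -
  have "0 \<le> l i / (l i + s) \<and> l i / (l i + s) \<le> 1" if "i \<in> K" for i
    using that assms(2,3) by (auto dest!: bspec[of _ _ i])
  then have "0 \<le> (\<Prod>i\<in>K. l i / (l i + s))" "(\<Prod>i\<in>K. l i / (l i + s)) \<le> 1"
    by (auto intro!: prod_nonneg prod_le_1)
  moreover have "0 \<le> m / (m + s)" "m / (m + s) \<le> 1"
    using assms(1,3) by auto
  ultimately show "0 \<le> hypoexp_laplace m l K s" "hypoexp_laplace m l K s \<le> 1"
    unfolding hypoexp_laplace_def by (meson mult_le_one mult_nonneg_nonneg)+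
qed

lemma one_minus_hypoexp_laplace_eq_sum_pf_coeff:
  fixes l :: "'a \<Rightarrow> real"
  assumes K: "finite K" "K \<noteq> {}" "inj_on l K" and l: "\<forall>i\<in>K. 0 < l i"
    and m: "0 < m" "\<forall>i\<in>K. m \<noteq> l i" and s: "0 \<le> s"
  shows "1 - hypoexp_laplace m l K s
    = (\<Sum>i\<in>K. pf_coeff K l i * (1 - m * l i / (l i - m) * (1 / (m + s) - 1 / (l i + s))))"
proof -
  have "(\<Sum>i\<in>K. pf_coeff K l i * (1 - m * l i / (l i - m) * (1 / (m + s) - 1 / (l i + s))))
      = (\<Sum>i\<in>K. pf_coeff K l i) - (\<Sum>i\<in>K. pf_coeff K l i * (m / (m + s) * (l i / (l i + s))))"
  proof -
    have "pf_coeff K l i * (1 - m * l i / (l i - m) * (1 / (m + s) - 1 / (l i + s)))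
        = pf_coeff K l i - pf_coeff K l i * (m / (m + s) * (l i / (l i + s)))" if "i \<in> K" for i
    proof -
      have pf: "m / (m + s) * (l i / (l i + s)) = m * l i / (l i - m) * (1 / (m + s) - 1 / (l i + s))"
        using that l m s by (intro ratio_mult_ratio_eq_diff) auto
      show ?thesis by (simp only: pf) (simp add: algebra_simps)
    qed
    then show ?thesis by (simp add: sum_subtractf[symmetric])
  qed
  also have "\<dots> = 1 - hypoexp_laplace m l K s"
  proof -
    have "(\<Sum>i\<in>K. pf_coeff K l i) = 1"
      using l by (intro sum_pf_coeff[OF K]) auto
    moreover have "(\<Prod>i\<in>K. l i / (l i + s)) = (\<Sum>i\<in>K. pf_coeff K l i * (l i / (l i + s)))"
      using l s by (intro prod_ratio_eq_sum_pf_coeff[OF K]) (auto simp: add_pos_nonneg)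
    ultimately show ?thesis by (simp add: hypoexp_laplace_def sum_distrib_left mult_ac)
  qed
  finally show ?thesis ..
qed

lemma has_integral_outage_kernel:
  fixes l :: "'a \<Rightarrow> real"
  assumes K: "finite K" "K \<noteq> {}" "inj_on l K" and l: "\<forall>i\<in>K. 0 < l i"
    and m: "0 < m" "\<forall>i\<in>K. m \<noteq> l i" and lg: "0 < lg" and lh: "0 < lh" and g: "0 < g"
  shows "((\<lambda>z. z / lg\<^sup>2 * exp (- z / lg) * (1 - hypoexp_laplace m l K (lh * (g - z))))
    has_integral (\<Sum>i\<in>K. pf_coeff K l i * outage_pair lg lh g m (l i))) {0..g}"
proof -
  have "((\<lambda>z. \<Sum>i\<in>K. pf_coeff K l i * (z / lg\<^sup>2 * exp (- z / lg) *
      (1 - m * l i / (l i - m) * (1 / (m + lh * (g - z)) - 1 / (l i + lh * (g - z))))))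
    has_integral (\<Sum>i\<in>K. pf_coeff K l i * outage_pair lg lh g m (l i))) {0..g}"
    using l m by (intro has_integral_sum[OF K(1)] has_integral_mult_right
        has_integral_outage_pair[OF lg lh g]) auto
  moreover have "(\<Sum>i\<in>K. pf_coeff K l i * (z / lg\<^sup>2 * exp (- z / lg) *
      (1 - m * l i / (l i - m) * (1 / (m + lh * (g - z)) - 1 / (l i + lh * (g - z))))))
    = z / lg\<^sup>2 * exp (- z / lg) * (1 - hypoexp_laplace m l K (lh * (g - z)))"
    if "z \<in> {0..g}" for z
  proof -
    have "0 \<le> lh * (g - z)" using that lh by simp
    from one_minus_hypoexp_laplace_eq_sum_pf_coeff[OF K l m this] show ?thesis
      by (simp add: sum_distrib_left mult_ac)
  qed
  ultimately show ?thesis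
    by (rule has_integral_eq[rotated])
qed

section \<open>Independent and exponential random variables\<close>

lemma nn_integral_indep_var_iterated:
  fixes X W :: "'a \<Rightarrow> 'b" and h :: "'b \<times> 'b \<Rightarrow> ennreal"
  assumes "prob_space M" "prob_space.indep_var M MX X MW W"
    and h: "h \<in> borel_measurable (MX \<Otimes>\<^sub>M MW)"
  shows "(\<integral>\<^sup>+\<omega>. h (X \<omega>, W \<omega>) \<partial>M) = (\<integral>\<^sup>+\<omega>. (\<integral>\<^sup>+x. h (x, W \<omega>) \<partial>distr M MX X) \<partial>M)"
proof -
  interpret prob_space M by fact
  have [measurable]: "X \<in> measurable M MX" "W \<in> measurable M MW"
    using indep_var_rv1[OF assms(2)] indep_var_rv2[OF assms(2)] by auto
  interpret DX: prob_space "distr M MX X" by (rule prob_space_distr) simp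
  interpret DW: prob_space "distr M MW W" by (rule prob_space_distr) simp
  interpret P: pair_sigma_finite "distr M MX X" "distr M MW W" ..
  have h': "h \<in> borel_measurable (distr M MX X \<Otimes>\<^sub>M distr M MW W)"
    using h measurable_cong_sets[OF sets_pair_measure_cong[OF sets_distr sets_distr] refl] by blast
  have "(\<lambda>(w, x). h (x, w)) \<in> borel_measurable (MW \<Otimes>\<^sub>M distr M MX X)"
  proof -
    have "(\<lambda>p. h (snd p, fst p)) \<in> borel_measurable (MW \<Otimes>\<^sub>M MX)"
      using h by measurable
    then show ?thesis
      using measurable_cong_sets[OF sets_pair_measure_cong[OF refl sets_distr] refl]
      by (auto simp: case_prod_beta)
  qed
  then have inner: "(\<lambda>w. \<integral>\<^sup>+x. h (x, w) \<partial>distr M MX X) \<in> borel_measurable MW"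
    using DX.borel_measurable_nn_integral[of "\<lambda>w x. h (x, w)" MW] by simp
  have indep: "distr M MX X \<Otimes>\<^sub>M distr M MW W = distr M (MX \<Otimes>\<^sub>M MW) (\<lambda>x. (X x, W x))"
    using indep_var_distribution_eq assms(2) by blast
  have "(\<integral>\<^sup>+\<omega>. h (X \<omega>, W \<omega>) \<partial>M) = (\<integral>\<^sup>+p. h p \<partial>distr M (MX \<Otimes>\<^sub>M MW) (\<lambda>x. (X x, W x)))"
    by (subst nn_integral_distr) (auto intro: h)
  also have "\<dots> = (\<integral>\<^sup>+p. h p \<partial>(distr M MX X \<Otimes>\<^sub>M distr M MW W))"
    by (simp add: indep)
  also have "\<dots> = (\<integral>\<^sup>+w. (\<integral>\<^sup>+x. h (x, w) \<partial>distr M MX X) \<partial>distr M MW W)"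
    by (rule P.nn_integral_snd[OF h', symmetric])
  also have "\<dots> = (\<integral>\<^sup>+\<omega>. (\<integral>\<^sup>+x. h (x, W \<omega>) \<partial>distr M MX X) \<partial>M)"
    by (subst nn_integral_distr) (auto intro: inner)
  finally show ?thesis .
qed

lemma indep_var_restrict_compose:
  fixes X :: "'i \<Rightarrow> 'a \<Rightarrow> real"
  assumes "prob_space M" "prob_space.indep_vars M (\<lambda>_. borel) X K"
    and "J1 \<subseteq> K" "J2 \<subseteq> K" "J1 \<inter> J2 = {}"
    and "f1 \<in> measurable (PiM J1 (\<lambda>_. borel)) N1" "f2 \<in> measurable (PiM J2 (\<lambda>_. borel)) N2"
  shows "prob_space.indep_var M N1 (\<lambda>\<omega>. f1 (\<lambda>i\<in>J1. X i \<omega>)) N2 (\<lambda>\<omega>. f2 (\<lambda>i\<in>J2. X i \<omega>))"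
proof -
  interpret prob_space M by fact
  from indep_var_compose[OF indep_var_restrict[OF assms(2,5,3,4)] assms(6,7)] show ?thesis
    by (simp add: comp_def)
qed

lemma nn_integral_indep_var_mult:
  fixes X1 X2 :: "'a \<Rightarrow> real"
  assumes "prob_space M" "prob_space.indep_var M borel X1 borel X2"
    and "\<And>\<omega>. 0 \<le> X1 \<omega>" "\<And>\<omega>. 0 \<le> X2 \<omega>"
  shows "(\<integral>\<^sup>+\<omega>. ennreal (X1 \<omega> * X2 \<omega>) \<partial>M)
    = (\<integral>\<^sup>+\<omega>. ennreal (X1 \<omega>) \<partial>M) * (\<integral>\<^sup>+\<omega>. ennreal (X2 \<omega>) \<partial>M)"
proof -
  interpret prob_space M by fact
  have borel: "(\<lambda>_. borel) = case_bool borel borel"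
    by (rule ext) (simp split: bool.split)
  have "indep_vars (\<lambda>_. borel) (case_bool X1 X2) UNIV"
    using assms(2) unfolding indep_var_def borel .
  then have "indep_vars (\<lambda>_. borel) (\<lambda>b \<omega>. ennreal (case_bool X1 X2 b \<omega>)) UNIV"
    by (rule indep_vars_compose2) simp
  then have "(\<integral>\<^sup>+\<omega>. (\<Prod>i\<in>UNIV. ennreal (case_bool X1 X2 i \<omega>)) \<partial>M)
      = (\<Prod>i\<in>UNIV. \<integral>\<^sup>+\<omega>. ennreal (case_bool X1 X2 i \<omega>) \<partial>M)"
    by (rule indep_vars_nn_integral[rotated]) auto
  then show ?thesis using assms(3,4) by (simp add: UNIV_bool mult.commute ennreal_mult)
qed

lemma nn_integral_indicator_exponential_lessThan:
  assumes "prob_space M" "distributed M lborel X (exponential_density l)" and l: "0 < l"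
  shows "(\<integral>\<^sup>+\<omega>. indicator {..<c} (X \<omega>) \<partial>M) = ennreal (if 0 \<le> c then 1 - exp (- c * l) else 0)"
proof -
  have "(\<integral>\<^sup>+\<omega>. indicator {..<c} (X \<omega>) \<partial>M)
      = (\<integral>\<^sup>+x. ennreal (exponential_density l x) * indicator {..<c} x \<partial>lborel)"
    by (rule distributed_nn_integral[OF assms(2), symmetric]) simp
  also have "\<dots> = (\<integral>\<^sup>+x. ennreal (l * exp (- x * l)) * indicator {0..c} x \<partial>lborel)"
    using AE_lborel_singleton[of c]
    by (intro nn_integral_cong_AE, eventually_elim)
      (auto simp: exponential_density_def split: split_indicator)
  also have "\<dots> = ennreal (if 0 \<le> c then 1 - exp (- c * l) else 0)"
  proof (cases "0 \<le> c")
    case True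
    have "(\<integral>\<^sup>+x. ennreal (l * exp (- x * l)) * indicator {0..c} x \<partial>lborel)
        = ennreal ((- exp (- c * l)) - (- exp (- 0 * l)))"
      using True l by (intro nn_integral_FTC_Icc) (auto intro!: derivative_eq_intros)
    then show ?thesis using True by simp
  qed simp
  finally show ?thesis .
qed

lemma nn_integral_exp_exponential:
  fixes l s :: real
  assumes "distributed M lborel X (exponential_density l)" and l: "0 < l" and s: "0 \<le> s"
  shows "(\<integral>\<^sup>+\<omega>. ennreal (exp (- s * X \<omega>)) \<partial>M) = ennreal (l / (l + s))"
proof -
  have "(\<integral>\<^sup>+\<omega>. ennreal (exp (- s * X \<omega>)) \<partial>M)
      = (\<integral>\<^sup>+x. ennreal (exponential_density l x) * ennreal (exp (- s * x)) \<partial>lborel)"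
    by (rule distributed_nn_integral[OF assms(1), symmetric]) simp
  also have "\<dots> = (\<integral>\<^sup>+x. ennreal (l / (l + s)) * ennreal (erlang_density 0 (l + s) x * x ^ 0) \<partial>lborel)"
  proof (intro nn_integral_cong)
    fix x :: real
    have "exponential_density l x * exp (- s * x) = l / (l + s) * (erlang_density 0 (l + s) x * x ^ 0)"
      using l s by (auto simp: exponential_density_def erlang_density_def exp_add[symmetric] field_simps)
    then show "ennreal (exponential_density l x) * ennreal (exp (- s * x))
        = ennreal (l / (l + s)) * ennreal (erlang_density 0 (l + s) x * x ^ 0)"
      using l s by (simp add: ennreal_mult[symmetric] exponential_density_nonneg)
  qed
  also have "\<dots> = ennreal (l / (l + s)) * (\<integral>\<^sup>+x. ennreal (erlang_density 0 (l + s) x * x ^ 0) \<partial>lborel)"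
    by (rule nn_integral_cmult) simp
  also have "\<dots> = ennreal (l / (l + s))"
    using l s by (subst nn_integral_erlang_ith_moment) auto
  finally show ?thesis .
qed

lemma AE_exponential_pos:
  assumes "prob_space M" and "distributed M lborel X (exponential_density l)"
  shows "AE \<omega> in M. 0 < X \<omega>"
proof -
  interpret prob_space M by fact
  have "AE x in lborel. 0 < ennreal (exponential_density l x) \<longrightarrow> 0 < x"
    using AE_lborel_singleton[of 0]
    by eventually_elim (auto simp: exponential_density_def split: if_splits)
  then show ?thesis
    using distributed_AE2[OF assms(2), of "\<lambda>x. 0 < x"] by simp
qed

lemma nn_integral_indicator_exponential_div_lessThan:
  fixes A Y :: "'a \<Rightarrow> real"
  assumes M: "prob_space M" and A: "distributed M lborel A (exponential_density lh)" and lh: "0 < lh"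
    and indep: "prob_space.indep_var M borel A borel Y" and Y: "AE \<omega> in M. 0 < Y \<omega>"
  shows "(\<integral>\<^sup>+\<omega>. indicator {..<c} (A \<omega> / Y \<omega>) \<partial>M)
    = ennreal (if 0 \<le> c then 1 - (\<integral>\<omega>. exp (- (lh * c) * Y \<omega>) \<partial>M) else 0)"
proof -
  interpret prob_space M by fact
  have [measurable]: "A \<in> borel_measurable M" "Y \<in> borel_measurable M"
    using indep_var_rv1[OF indep] indep_var_rv2[OF indep] by auto
  have h: "(\<lambda>p. indicator {..<c} (fst p / snd p) :: ennreal) \<in> borel_measurable (borel \<Otimes>\<^sub>M borel)"
    by measurable
  have "(\<integral>\<^sup>+\<omega>. indicator {..<c} (A \<omega> / Y \<omega>) \<partial>M)
      = (\<integral>\<^sup>+\<omega>. (\<integral>\<^sup>+a. indicator {..<c} (a / Y \<omega>) \<partial>distr M borel A) \<partial>M)"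
    using nn_integral_indep_var_iterated[OF M indep h] by simp
  also have "\<dots> = (\<integral>\<^sup>+\<omega>. ennreal (if 0 \<le> c then 1 - exp (- (lh * c) * Y \<omega>) else 0) \<partial>M)"
    using Y
  proof (intro nn_integral_cong_AE, eventually_elim)
    case (elim \<omega>)
    have "(\<integral>\<^sup>+a. indicator {..<c} (a / Y \<omega>) \<partial>distr M borel A) = (\<integral>\<^sup>+\<omega>'. indicator {..<c} (A \<omega>' / Y \<omega>) \<partial>M)"
      by (subst nn_integral_distr) auto
    also have "\<dots> = (\<integral>\<^sup>+\<omega>'. indicator {..<c * Y \<omega>} (A \<omega>') \<partial>M)"
      using elim by (intro nn_integral_cong) (simp add: indicator_def pos_divide_less_eq)
    also have "\<dots> = ennreal (if 0 \<le> c * Y \<omega> then 1 - exp (- (c * Y \<omega>) * lh) else 0)"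
      by (rule nn_integral_indicator_exponential_lessThan[OF M A lh])
    finally show ?case
      using elim by (simp add: zero_le_mult_iff mult_ac)
  qed
  also have "\<dots> = ennreal (if 0 \<le> c then 1 - (\<integral>\<omega>. exp (- (lh * c) * Y \<omega>) \<partial>M) else 0)"
  proof (cases "0 \<le> c")
    case True
    have bounded: "AE \<omega> in M. 0 \<le> 1 - exp (- (lh * c) * Y \<omega>) \<and> norm (exp (- (lh * c) * Y \<omega>)) \<le> 1"
      using Y by eventually_elim (use True lh in \<open>simp add: less_imp_le\<close>)
    have "integrable M (\<lambda>\<omega>. exp (- (lh * c) * Y \<omega>))"
      using bounded by (intro integrable_const_bound[where B=1]) auto
    then have "(\<integral>\<^sup>+\<omega>. ennreal (1 - exp (- (lh * c) * Y \<omega>)) \<partial>M)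
        = ennreal (\<integral>\<omega>. 1 - exp (- (lh * c) * Y \<omega>) \<partial>M)"
      using bounded by (intro nn_integral_eq_integral) auto
    then show ?thesis
      using True \<open>integrable M _\<close> by (simp add: prob_space)
  qed simp
  finally show ?thesis .
qed

lemma emeasure_exponential_div_plus_less:
  fixes A Y Z :: "'a \<Rightarrow> real"
  assumes M: "prob_space M" and A: "distributed M lborel A (exponential_density lh)" and lh: "0 < lh"
    and indep_AY: "prob_space.indep_var M borel A borel Y" and Y: "AE \<omega> in M. 0 < Y \<omega>"
    and indep_Z: "prob_space.indep_var M borel (\<lambda>\<omega>. A \<omega> / Y \<omega>) borel Z"
  shows "emeasure M {\<omega> \<in> space M. A \<omega> / Y \<omega> + Z \<omega> < g}
    = (\<integral>\<^sup>+\<omega>. ennreal (if Z \<omega> \<le> g then 1 - (\<integral>\<omega>'. exp (- (lh * (g - Z \<omega>)) * Y \<omega>') \<partial>M) else 0) \<partial>M)"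
proof -
  interpret prob_space M by fact
  have [measurable]: "(\<lambda>\<omega>. A \<omega> / Y \<omega>) \<in> borel_measurable M" "Z \<in> borel_measurable M"
    using indep_var_rv1[OF indep_Z] indep_var_rv2[OF indep_Z] by auto
  have h: "(\<lambda>p. indicator {..<g - snd p} (fst p) :: ennreal) \<in> borel_measurable (borel \<Otimes>\<^sub>M borel)"
    unfolding indicator_def lessThan_iff by measurable
  have "emeasure M {\<omega> \<in> space M. A \<omega> / Y \<omega> + Z \<omega> < g}
      = (\<integral>\<^sup>+\<omega>. indicator {\<omega> \<in> space M. A \<omega> / Y \<omega> + Z \<omega> < g} \<omega> \<partial>M)"
    by (rule nn_integral_indicator[symmetric]) measurable
  also have "\<dots> = (\<integral>\<^sup>+\<omega>. indicator {..<g - Z \<omega>} (A \<omega> / Y \<omega>) \<partial>M)"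
    by (intro nn_integral_cong) (simp add: indicator_def less_diff_eq)
  also have "\<dots> = (\<integral>\<^sup>+\<omega>. (\<integral>\<^sup>+x. indicator {..<g - Z \<omega>} x \<partial>distr M borel (\<lambda>\<omega>. A \<omega> / Y \<omega>)) \<partial>M)"
    using nn_integral_indep_var_iterated[OF M indep_Z h] by simp
  also have "\<dots> = (\<integral>\<^sup>+\<omega>. (\<integral>\<^sup>+\<omega>'. indicator {..<g - Z \<omega>} (A \<omega>' / Y \<omega>') \<partial>M) \<partial>M)"
    by (subst nn_integral_distr) auto
  also have "\<dots> = (\<integral>\<^sup>+\<omega>. ennreal (if Z \<omega> \<le> g then 1 - (\<integral>\<omega>'. exp (- (lh * (g - Z \<omega>)) * Y \<omega>') \<partial>M) else 0) \<partial>M)"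
    by (simp add: nn_integral_indicator_exponential_div_lessThan[OF M A lh indep_AY Y])
  finally show ?thesis .
qed

lemma nn_integral_exp_sum_indep_exponential:
  fixes E :: "'i \<Rightarrow> 'a \<Rightarrow> real" and l :: "'i \<Rightarrow> real"
  assumes M: "prob_space M" and K: "finite K" and indep: "prob_space.indep_vars M (\<lambda>_. borel) E K"
    and E: "\<forall>i\<in>K. distributed M lborel (E i) (exponential_density (l i))"
    and l: "\<forall>i\<in>K. 0 < l i" and s: "0 \<le> s"
  shows "(\<integral>\<^sup>+\<omega>. ennreal (exp (- s * (\<Sum>i\<in>K. E i \<omega>))) \<partial>M) = ennreal (\<Prod>i\<in>K. l i / (l i + s))"
proof -
  interpret prob_space M by fact
  have "(\<integral>\<^sup>+\<omega>. ennreal (exp (- s * (\<Sum>i\<in>K. E i \<omega>))) \<partial>M)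
      = (\<integral>\<^sup>+\<omega>. (\<Prod>i\<in>K. ennreal (exp (- s * E i \<omega>))) \<partial>M)"
    by (intro nn_integral_cong) (simp add: sum_distrib_left exp_sum[OF K] prod_ennreal)
  also have "\<dots> = (\<Prod>i\<in>K. \<integral>\<^sup>+\<omega>. ennreal (exp (- s * E i \<omega>)) \<partial>M)"
    by (rule indep_vars_nn_integral[OF K indep_vars_compose2[OF indep]]) auto
  also have "\<dots> = (\<Prod>i\<in>K. ennreal (l i / (l i + s)))"
    using E l s by (intro prod.cong refl nn_integral_exp_exponential) auto
  also have "\<dots> = ennreal (\<Prod>i\<in>K. l i / (l i + s))"
    using l s by (intro prod_ennreal) (auto simp: add_pos_nonneg less_imp_le)
  finally show ?thesis .
qed

lemma nn_integral_exp_exponential_plus_sum: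
  fixes E :: "'i \<Rightarrow> 'a \<Rightarrow> real" and l :: "'i \<Rightarrow> real"
  assumes M: "prob_space M" and K: "finite K" and indep: "prob_space.indep_vars M (\<lambda>_. borel) E K"
    and E: "\<forall>i\<in>K. distributed M lborel (E i) (exponential_density (l i))"
    and l: "\<forall>i\<in>K. 0 < l i" and F: "distributed M lborel F (exponential_density m)" and m: "0 < m"
    and indep_F: "prob_space.indep_var M borel F borel (\<lambda>\<omega>. \<Sum>i\<in>K. E i \<omega>)" and s: "0 \<le> s"
  shows "(\<integral>\<^sup>+\<omega>. ennreal (exp (- s * (F \<omega> + (\<Sum>i\<in>K. E i \<omega>)))) \<partial>M)
    = ennreal (hypoexp_laplace m l K s)"
proof -
  interpret prob_space M by fact
  have "indep_var borel ((\<lambda>x. exp (- s * x)) \<circ> F) borel ((\<lambda>x. exp (- s * x)) \<circ> (\<lambda>\<omega>. \<Sum>i\<in>K. E i \<omega>))"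
    by (rule indep_var_compose[OF indep_F]) auto
  then have "(\<integral>\<^sup>+\<omega>. ennreal (exp (- s * F \<omega>) * exp (- s * (\<Sum>i\<in>K. E i \<omega>))) \<partial>M)
      = (\<integral>\<^sup>+\<omega>. ennreal (exp (- s * F \<omega>)) \<partial>M) * (\<integral>\<^sup>+\<omega>. ennreal (exp (- s * (\<Sum>i\<in>K. E i \<omega>))) \<partial>M)"
    by (intro nn_integral_indep_var_mult[OF M]) (auto simp: comp_def)
  also have "\<dots> = ennreal (m / (m + s)) * ennreal (\<Prod>i\<in>K. l i / (l i + s))"
    unfolding nn_integral_exp_exponential[OF F m s] nn_integral_exp_sum_indep_exponential[OF M K indep E l s] ..
  also have "\<dots> = ennreal (hypoexp_laplace m l K s)"
  proof -
    have "0 \<le> (\<Prod>i\<in>K. l i / (l i + s))"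
      using l s by (intro prod_nonneg) (auto simp: add_pos_nonneg less_imp_le)
    then show ?thesis using m s by (simp add: hypoexp_laplace_def ennreal_mult[symmetric])
  qed
  finally show ?thesis
    by (simp add: distrib_left flip: exp_add)
qed

lemma integral_exp_exponential_plus_sum:
  fixes E :: "'i \<Rightarrow> 'a \<Rightarrow> real" and l :: "'i \<Rightarrow> real"
  assumes M: "prob_space M" and K: "finite K" and indep: "prob_space.indep_vars M (\<lambda>_. borel) E K"
    and E: "\<forall>i\<in>K. distributed M lborel (E i) (exponential_density (l i))"
    and l: "\<forall>i\<in>K. 0 < l i" and F: "distributed M lborel F (exponential_density m)" and m: "0 < m"
    and indep_F: "prob_space.indep_var M borel F borel (\<lambda>\<omega>. \<Sum>i\<in>K. E i \<omega>)" and s: "0 \<le> s"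
  shows "(\<integral>\<omega>. exp (- s * (F \<omega> + (\<Sum>i\<in>K. E i \<omega>))) \<partial>M) = hypoexp_laplace m l K s"
proof -
  interpret prob_space M by fact
  have [measurable]: "F \<in> borel_measurable M" "(\<lambda>\<omega>. \<Sum>i\<in>K. E i \<omega>) \<in> borel_measurable M"
    using indep_var_rv1[OF indep_F] indep_var_rv2[OF indep_F] by auto
  show ?thesis
    using nn_integral_exp_exponential_plus_sum[OF assms] hypoexp_laplace_bounds(1)[OF m l s]
    by (subst integral_eq_nn_integral) auto
qed

lemma AE_exponential_plus_sum_pos:
  assumes M: "prob_space M" and K: "finite K"
    and E: "\<forall>i\<in>K. distributed M lborel (E i) (exponential_density (l i))"
    and F: "distributed M lborel F (exponential_density m)"
  shows "AE \<omega> in M. 0 < F \<omega> + (\<Sum>i\<in>K. E i \<omega>)"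
proof -
  interpret prob_space M by fact
  have "AE \<omega> in M. \<forall>i\<in>K. 0 < E i \<omega>"
    using E by (intro AE_finite_allI[OF K]) (auto intro: AE_exponential_pos[OF M])
  with AE_exponential_pos[OF M F] show ?thesis
    by eventually_elim (intro add_pos_nonneg sum_nonneg, auto simp: less_imp_le)
qed

lemma indep_vars_four_groupings:
  fixes A S F Z :: "'a \<Rightarrow> real"
  assumes M: "prob_space M" and indep: "prob_space.indep_vars M (\<lambda>_. borel) (\<lambda>k. [A, S, F, Z] ! k) {0..<4}"
  shows "prob_space.indep_var M borel F borel S"
    and "prob_space.indep_var M borel A borel (\<lambda>\<omega>. F \<omega> + S \<omega>)"
    and "prob_space.indep_var M borel (\<lambda>\<omega>. A \<omega> / (F \<omega> + S \<omega>)) borel Z"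
proof -
  have "prob_space.indep_var M borel (\<lambda>\<omega>. (\<lambda>x. x 2) (\<lambda>k\<in>{2}. ([A, S, F, Z] ! k) \<omega>))
      borel (\<lambda>\<omega>. (\<lambda>x. x 1) (\<lambda>k\<in>{1}. ([A, S, F, Z] ! k) \<omega>))"
    by (rule indep_var_restrict_compose[OF M indep]) (auto, measurable)
  then show "prob_space.indep_var M borel F borel S" by simp
  have "prob_space.indep_var M borel (\<lambda>\<omega>. (\<lambda>x. x 0) (\<lambda>k\<in>{0}. ([A, S, F, Z] ! k) \<omega>))
      borel (\<lambda>\<omega>. (\<lambda>x. x 2 + x 1) (\<lambda>k\<in>{1, 2}. ([A, S, F, Z] ! k) \<omega>))"
    by (rule indep_var_restrict_compose[OF M indep]) (auto, measurable)
  then show "prob_space.indep_var M borel A borel (\<lambda>\<omega>. F \<omega> + S \<omega>)" by simp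
  have "prob_space.indep_var M borel (\<lambda>\<omega>. (\<lambda>x. x 0 / (x 2 + x 1)) (\<lambda>k\<in>{0, 1, 2}. ([A, S, F, Z] ! k) \<omega>))
      borel (\<lambda>\<omega>. (\<lambda>x. x 3) (\<lambda>k\<in>{3}. ([A, S, F, Z] ! k) \<omega>))"
    by (rule indep_var_restrict_compose[OF M indep]) (auto, measurable)
  then show "prob_space.indep_var M borel (\<lambda>\<omega>. A \<omega> / (F \<omega> + S \<omega>)) borel Z" by simp
qed

lemma nn_integral_gamma2_density_has_integral:
  assumes lg: "0 < lg" and q: "\<And>z. 0 \<le> z \<Longrightarrow> z \<le> g \<Longrightarrow> 0 \<le> q z"
    and int: "((\<lambda>z. z / lg\<^sup>2 * exp (- z / lg) * q z) has_integral V) {0..g}"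
  shows "(\<integral>\<^sup>+z. ennreal (if z > 0 then z / lg\<^sup>2 * exp (- z / lg) else 0)
      * ennreal (if z \<le> g then q z else 0) \<partial>lborel) = ennreal V"
proof -
  have "(\<integral>\<^sup>+z. ennreal (if z > 0 then z / lg\<^sup>2 * exp (- z / lg) else 0)
      * ennreal (if z \<le> g then q z else 0) \<partial>lborel)
    = (\<integral>\<^sup>+z. ennreal (z / lg\<^sup>2 * exp (- z / lg) * q z) * indicator {0..g} z \<partial>lborel)"
    using lg q by (intro nn_integral_cong) (auto simp: ennreal_mult[symmetric] indicator_def)
  also have "\<dots> = ennreal V"
    using lg q by (intro nn_integral_has_integral_lebesgue'[OF _ int]) auto
  finally show ?thesis .
qed

theorem lemma2:
  fixes M :: "'a measure"
    and A F Z :: "'a \<Rightarrow> real"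
    and E :: "nat \<Rightarrow> 'a \<Rightarrow> real"
    and I :: nat
    and lh lg le g :: real
    and l :: "nat \<Rightarrow> real"
  assumes "prob_space M"
    and "I \<ge> 1"
    and "lh > 0" and "lg > 0" and "le > 0"
    and "\<forall>i\<in>{1..I}. l i > 0"
    and "inj_on l {1..I}"
    and "\<forall>i\<in>{1..I}. le \<noteq> l i"
    and "prob_space.indep_vars M (\<lambda>_. borel) E {1..I}"
    and "\<forall>i\<in>{1..I}. distributed M lborel (E i) (exponential_density (l i))"
    and "prob_space.indep_vars M (\<lambda>_. borel)
           (\<lambda>k. [A, (\<lambda>\<omega>. \<Sum>i=1..I. E i \<omega>), F, Z] ! k) {0..<4}"
    and "distributed M lborel A (exponential_density lh)"
    and "distributed M lborel F (exponential_density le)"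
    and "distributed M lborel Z
           (\<lambda>z. ennreal (if z > 0 then z / lg\<^sup>2 * exp (- z / lg) else 0))"
    and "g > 0"
  shows "measure M {\<omega> \<in> space M. A \<omega> / (F \<omega> + (\<Sum>i=1..I. E i \<omega>)) + Z \<omega> < g} =
    (\<Sum>i=1..I.
       let c = (\<Prod>j\<in>{1..I} - {i}. l j / (l j - l i));
           a = (\<lambda>x. x / (lg * lh));
           b = (\<lambda>x. (x + lh * g) / (lg * lh))
       in c / (lg ^ 3 * lh\<^sup>2 * (l i - le)) *
          (lg * exp (- (le + l i + lh * g) / (lg * lh)) *
             (exp (a (l i)) *
                (le * l i * (le + lh * g) * (Ei (a le) - Ei (b le))
                 + lg * lh\<^sup>2 * (le - l i) * (lg + g) * exp (a le))
              - le * l i * exp (a le) * (l i + lh * g) * (Ei (a (l i)) - Ei (b (l i))))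
           + lg ^ 3 * lh\<^sup>2 * (l i - le)))"
proof -
  define S where "S \<omega> = (\<Sum>i=1..I. E i \<omega>)" for \<omega>
  define L where "L = hypoexp_laplace le l {1..I}"
  define V where "V = (\<Sum>i\<in>{1..I}. pf_coeff {1..I} l i * outage_pair lg lh g le (l i))"
  note indep = indep_vars_four_groupings[OF assms(1) assms(11)[folded S_def[abs_def]]]
  have Y_pos: "AE \<omega> in M. 0 < F \<omega> + S \<omega>"
    unfolding S_def using AE_exponential_plus_sum_pos[OF assms(1) _ assms(10,13)] by simp
  have laplace: "(\<integral>\<omega>. exp (- s * (F \<omega> + S \<omega>)) \<partial>M) = L s" if "0 \<le> s" for s
    unfolding S_def L_def using that assms indep(1)
    by (intro integral_exp_exponential_plus_sum[OF assms(1)]) (auto simp: S_def[abs_def])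
  have kernel_nonneg: "0 \<le> 1 - L (lh * (g - z))" if "0 \<le> z" "z \<le> g" for z
    using hypoexp_laplace_bounds(2)[where m=le and l=l and K="{1..I}" and s="lh * (g - z)"] that assms(3,5,6) by (simp add: L_def)
  have kernel: "((\<lambda>z. z / lg\<^sup>2 * exp (- z / lg) * (1 - L (lh * (g - z)))) has_integral V) {0..g}"
    unfolding L_def V_def using assms(2-8,15) by (intro has_integral_outage_kernel) auto
  have "emeasure M {\<omega> \<in> space M. A \<omega> / (F \<omega> + S \<omega>) + Z \<omega> < g}
      = (\<integral>\<^sup>+\<omega>. ennreal (if Z \<omega> \<le> g
          then 1 - (\<integral>\<omega>'. exp (- (lh * (g - Z \<omega>)) * (F \<omega>' + S \<omega>')) \<partial>M) else 0) \<partial>M)"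
    by (rule emeasure_exponential_div_plus_less[OF assms(1,12,3) indep(2) Y_pos indep(3)])
  also have "\<dots> = (\<integral>\<^sup>+\<omega>. ennreal (if Z \<omega> \<le> g then 1 - L (lh * (g - Z \<omega>)) else 0) \<partial>M)"
    using assms(3) by (intro nn_integral_cong) (simp add: laplace[simplified])
  also have "\<dots> = (\<integral>\<^sup>+z. ennreal (if z > 0 then z / lg\<^sup>2 * exp (- z / lg) else 0)
      * ennreal (if z \<le> g then 1 - L (lh * (g - z)) else 0) \<partial>lborel)"
    by (rule distributed_nn_integral[OF assms(14), symmetric]) (unfold L_def hypoexp_laplace_def, measurable)
  also have "\<dots> = ennreal V"
    by (rule nn_integral_gamma2_density_has_integral[OF assms(4) kernel_nonneg kernel])
  finally show ?thesis
    using has_integral_nonneg[OF kernel] kernel_nonneg assms(4)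
    by (simp add: measure_def S_def V_def Let_def outage_pair_def pf_coeff_def)
qed

end
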